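(* Let $r\ge0$ be an integer, let $a,b,c,z,A_1,\dots,A_{r+1},B_1,\dots,B_r$ and $q$ be complex numbers with $|q|<1$ and $|cz|<1$ (generic, so that all denominators are nonzero and all series converge). Then $$\frac{(azq;q)_\infty}{(bz;q)_\infty}\,{}_{r+1}\phi_r\Big[\genfrac{}{}{0pt}{}{A_1,\ldots,A_{r+1}}{B_1,\ldots,B_{r}};q,cz\Big] =\lim_{x,y\to\infty}\sum_{n=0}^{\infty}\frac{(az,(az)^{1/2}q,-(az)^{1/2}q,aq/b,x,y;q)_n}{(q,(az)^{1/2},-(az)^{1/2},bz,azq/x,azq/y;q)_n}\Big(\frac{bz}{xy}\Big)^n \,{}_{r+3}\phi_{r+2}\Big[\genfrac{}{}{0pt}{}{azq^n,azq^{2n+1},A_1,\ldots,A_{r+1}}{bzq^n,azq^{2n},B_1,\ldots,B_{r}};q,czq^n\Big].$$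
   Context: $(x;q)_\infty=\prod_{j\ge0}(1-xq^j)$, $(x;q)_n=\prod_{j=0}^{n-1}(1-xq^j)$, and $(x_1,\dots,x_m;q)_n=\prod_{i=1}^m(x_i;q)_n$. The basic hypergeometric series is ${}_{s+1}\phi_s\big[\genfrac{}{}{0pt}{}{a_1,\ldots,a_{s+1}}{b_1,\ldots,b_{s}};q,w\big]=\sum_{n\ge0}\frac{(a_1,\ldots,a_{s+1};q)_n}{(q,b_1,\ldots,b_s;q)_n}w^n$. *)

theory Defs
  imports "HOL-Analysis.Analysis"
begin

definition qpoch :: "complex \<Rightarrow> complex \<Rightarrow> nat \<Rightarrow> complex" where
  "qpoch x q n = (\<Prod>j<n. 1 - x * q ^ j)"

definition qpoch_inf :: "complex \<Rightarrow> complex \<Rightarrow> complex" where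
  "qpoch_inf x q = (\<Prod>j. 1 - x * q ^ j)"

definition qphi :: "complex list \<Rightarrow> complex list \<Rightarrow> complex \<Rightarrow> complex \<Rightarrow> complex" where
  "qphi as bs q w =
     (\<Sum>n. (\<Prod>a\<leftarrow>as. qpoch a q n) / (qpoch q q n * (\<Prod>b\<leftarrow>bs. qpoch b q n)) * w ^ n)"

end

theory Submission
  imports Defs
begin

(*
  Write u = az, v = bz, p = aq/b and w = cz, so that p v = u q. For fixed n the factor
  (x;q)_n / ((uq/x;q)_n x^n) of the n-th summand tends to (-1)^n q^(n choose 2) as x tends to
  infinity, and for large x, y the summands are dominated by a summable sequence, so by Tannery's
  theorem the limit can be taken termwise. Expanding the inner r+3phi(r+2) and interchanging the
  two absolutely convergent summations, the k-th term of the r+1phi(r) gets the factor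
  Sum_n T(k, n) / (1 - u), where T(k, n) is (u;q)_k/(v;q)_k times the n-th term of a limiting case
  of Rogers' well-poised 6phi5 sum with u, v replaced by u q^k, v q^k. Since p v = u q,
  T(k, n) - T(k+1, n) telescopes in n; hence Sum_n T(k, n) does not depend on k, and letting k
  tend to infinity (Tannery again) only T(k, 0), with limit (1 - u)(uq;q)_inf/(v;q)_inf, survives.
*)

section \<open>q-Pochhammer symbols\<close>

lemma qpoch_0 [simp]: "qpoch t q 0 = 1"
  by (simp add: qpoch_def)

lemma qpoch_0_left [simp]: "qpoch 0 q n = 1"
  by (simp add: qpoch_def)

lemma qpoch_Suc: "qpoch t q (Suc n) = qpoch t q n * (1 - t * q ^ n)"
  by (simp add: qpoch_def)

lemma qpoch_Suc_shift: "qpoch t q (Suc n) = (1 - t) * qpoch (t * q) q n"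
  unfolding qpoch_def by (subst prod.lessThan_Suc_shift) (simp add: mult.assoc)

lemma qpoch_shift: "(1 - t) * qpoch (t * q) q n = qpoch t q n * (1 - t * q ^ n)"
  by (metis qpoch_Suc qpoch_Suc_shift)

lemma qpoch_add: "qpoch t q (m + k) = qpoch t q m * qpoch (t * q ^ m) q k"
  by (induction k) (simp_all add: qpoch_Suc power_add mult.assoc)

lemma qpoch_nonzero:
  assumes "\<And>j. t * q ^ j \<noteq> 1"
  shows "qpoch t q n \<noteq> 0"
  using assms by (simp add: qpoch_def)

lemma qpoch_shifted_nonzero:
  assumes "\<And>j. t * q ^ j \<noteq> 1"
  shows "qpoch (t * q ^ m) q n \<noteq> 0"
  by (rule qpoch_nonzero) (simp add: assms mult.assoc flip: power_add)

lemma norm_mult_power_less_one: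
  fixes q :: complex
  assumes "norm q < 1"
  shows "norm (q * q ^ j) < 1"
proof -
  have "norm (q * q ^ j) \<le> norm q"
    using assms by (simp add: norm_mult norm_power mult_left_le power_le_one)
  then show ?thesis
    using assms by simp
qed

lemma mult_power_neq_one:
  fixes q :: complex
  assumes "norm q < 1"
  shows "q * q ^ j \<noteq> 1"
  using norm_mult_power_less_one[OF assms, of j] by auto

lemma qpoch_plus_minus_sqrt:
  assumes s: "s ^ 2 = t" and t: "\<And>j. t * q ^ j \<noteq> 1"
  shows "qpoch (s * q) q n * qpoch (- s * q) q n / (qpoch s q n * qpoch (- s) q n)
         = (1 - t * q ^ (2 * n)) / (1 - t)"
proof -
  have pm: "(1 - s * x) * (1 + s * x) = 1 - t * x ^ 2" for x
    using s by (simp add: algebra_simps power2_eq_square)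
  have "qpoch s q n * qpoch (- s) q n = (\<Prod>j<n. 1 - t * (q ^ j) ^ 2)"
    by (simp add: qpoch_def pm flip: prod.distrib)
  also have "\<dots> \<noteq> 0"
    using t by (simp add: flip: power_mult)
  finally have den: "qpoch s q n * qpoch (- s) q n \<noteq> 0" .
  have "(1 - t) * (qpoch (s * q) q n * qpoch (- s * q) q n)
        = ((1 - s) * qpoch (s * q) q n) * ((1 - (- s)) * qpoch (- s * q) q n)"
    using pm[of 1] by (simp add: ac_simps)
  also have "\<dots> = qpoch s q n * qpoch (- s) q n * (1 - t * (q ^ n) ^ 2)"
    unfolding qpoch_shift by (simp add: ac_simps flip: pm)
  finally show ?thesis
    using den t[of 0] by (simp add: field_simps flip: power_mult)
qed

lemma qpoch_div_power:
  assumes "x \<noteq> 0"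
  shows "qpoch x q n / x ^ n = (\<Prod>j<n. inverse x - q ^ j)"
  using assms by (simp add: qpoch_def prod_dividef field_simps)

lemma tendsto_qpoch [tendsto_intros]:
  "(f \<longlongrightarrow> t) F \<Longrightarrow> ((\<lambda>x. qpoch (f x) q n) \<longlongrightarrow> qpoch t q n) F"
  unfolding qpoch_def by (intro tendsto_intros)

lemma norm_one_minus_mult_power_le:
  fixes t q :: complex
  assumes "norm q \<le> 1"
  shows "norm (1 - t * q ^ m) \<le> 1 + norm t"
proof -
  have "norm (t * q ^ m) \<le> norm t"
    using assms by (simp add: norm_mult norm_power mult_left_le power_le_one)
  then show ?thesis
    using norm_triangle_ineq4[of 1 "t * q ^ m"] by simp
qed

lemma sum_power_le_inverse_one_minus:
  fixes r :: real
  assumes "0 \<le> r" "r < 1"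
  shows "(\<Sum>j<n. r ^ j) \<le> 1 / (1 - r)"
  using assms by (simp add: sum_gp_strict divide_right_mono)

lemma norm_inverse_one_minus_le:
  fixes s :: complex
  assumes "norm s \<le> 1/2"
  shows "norm (1 / (1 - s)) \<le> exp (2 * norm s)"
proof -
  have pos: "0 < 1 - norm s" using assms by simp
  have "norm (1 / (1 - s)) \<le> 1 / (1 - norm s)"
    using norm_triangle_ineq2[of 1 s] pos by (simp add: norm_divide frac_le)
  also have "\<dots> \<le> 1 + 2 * norm s"
    using assms pos mult_left_mono[of "norm s" "1/2" "norm s"]
    by (simp add: divide_simps algebra_simps)
  also have "\<dots> \<le> exp (2 * norm s)" by (rule exp_ge_add_one_self)
  finally show ?thesis .
qed

lemma norm_inverse_qpoch_le:
  assumes q: "norm q < 1" and t: "norm t \<le> 1/2"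
  shows "norm (1 / qpoch t q n) \<le> exp (2 * norm t / (1 - norm q))"
proof -
  have "norm (1 / qpoch t q n) = (\<Prod>j<n. norm (1 / (1 - t * q ^ j)))"
    by (simp add: qpoch_def norm_divide prod_norm prod_dividef)
  also have "\<dots> \<le> (\<Prod>j<n. exp (2 * norm t * norm q ^ j))"
  proof (rule prod_mono)
    fix j
    have "norm (t * q ^ j) \<le> norm t"
      using q by (simp add: norm_mult norm_power mult_left_le power_le_one)
    then show "0 \<le> norm (1 / (1 - t * q ^ j)) \<and> norm (1 / (1 - t * q ^ j)) \<le> exp (2 * norm t * norm q ^ j)"
      using norm_inverse_one_minus_le[of "t * q ^ j"] t by (simp add: norm_mult norm_power mult.assoc)
  qed
  also have "\<dots> = exp (2 * norm t * (\<Sum>j<n. norm q ^ j))"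
    by (simp add: exp_sum sum_distrib_left)
  also have "\<dots> \<le> exp (2 * norm t * (1 / (1 - norm q)))"
    using sum_power_le_inverse_one_minus[of "norm q" n] q by (intro exp_mono mult_left_mono) auto
  finally show ?thesis by simp
qed

lemma convergent_prod_qpoch:
  fixes t q :: complex
  assumes "norm q < 1"
  shows "convergent_prod (\<lambda>j. 1 - t * q ^ j)"
  using assms by (intro abs_convergent_prod_imp_convergent_prod summable_imp_abs_convergent_prod)
     (simp add: norm_mult norm_power summable_geometric)

lemma qpoch_LIMSEQ:
  assumes "norm q < 1"
  shows "(\<lambda>n. qpoch t q n) \<longlonglongrightarrow> qpoch_inf t q"
  using convergent_prod_LIMSEQ[OF convergent_prod_qpoch[OF assms]]
  by (simp add: qpoch_def qpoch_inf_def LIMSEQ_lessThan_iff_atMost)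

lemma qpoch_inf_nonzero:
  assumes "norm q < 1" and "\<And>j. t * q ^ j \<noteq> 1"
  shows "qpoch_inf t q \<noteq> 0"
  unfolding qpoch_inf_def
  by (rule prodinf_nonzero[OF convergent_prod_qpoch[OF assms(1)]]) (use assms(2) in auto)

lemma prod_list_qpoch_LIMSEQ:
  assumes "norm q < 1"
  shows "(\<lambda>k. \<Prod>a\<leftarrow>As. qpoch a q k) \<longlonglongrightarrow> (\<Prod>a\<leftarrow>As. qpoch_inf a q)"
  by (induction As) (simp_all add: tendsto_mult qpoch_LIMSEQ[OF assms])

lemma Bseq_qpoch_quotient:
  assumes q: "norm q < 1" and Bs: "\<And>b j. b \<in> set Bs \<Longrightarrow> b * q ^ j \<noteq> 1"
  shows "Bseq (\<lambda>k. (\<Prod>a\<leftarrow>As. qpoch a q k) / (\<Prod>b\<leftarrow>Bs. qpoch b q k))"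
proof -
  have "(\<Prod>b\<leftarrow>Bs. qpoch_inf b q) \<noteq> 0"
    using qpoch_inf_nonzero[OF q Bs] by (auto simp: prod_list_zero_iff)
  then have "(\<lambda>k. (\<Prod>a\<leftarrow>As. qpoch a q k) / (\<Prod>b\<leftarrow>Bs. qpoch b q k))
      \<longlonglongrightarrow> (\<Prod>a\<leftarrow>As. qpoch_inf a q) / (\<Prod>b\<leftarrow>Bs. qpoch_inf b q)"
    by (intro tendsto_divide prod_list_qpoch_LIMSEQ q)
  then show ?thesis
    by (intro convergent_imp_Bseq convergentI)
qed

lemma Bseq_qpoch_ratio:
  assumes "norm q < 1" and "\<And>j. s * q ^ j \<noteq> 1"
  shows "Bseq (\<lambda>k. qpoch t q k / qpoch s q k)"
  using Bseq_qpoch_quotient[of q "[s]" "[t]"] assms by simp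

lemma Bseq_inverse_one_minus_mult_power:
  fixes t q :: complex
  assumes "norm q < 1" and "\<And>j. t * q ^ j \<noteq> 1"
  shows "Bseq (\<lambda>m. 1 / (1 - t * q ^ m))"
proof -
  have "(\<lambda>m. 1 - t * q ^ m) \<longlonglongrightarrow> 1 - t * 0"
    by (intro tendsto_intros LIMSEQ_power_zero assms(1))
  then have "(\<lambda>m. 1 / (1 - t * q ^ m)) \<longlonglongrightarrow> 1 / 1"
    by (intro tendsto_divide) auto
  then show ?thesis by (intro convergent_imp_Bseq convergentI)
qed

section \<open>The factors depending on x and y\<close>

(* (-1)^n q^(n choose 2), the leading coefficient of (x;q)_n as a polynomial in x *)
definition qpoch_lead_coeff :: "complex \<Rightarrow> nat \<Rightarrow> complex" where
  "qpoch_lead_coeff q n = (\<Prod>j<n. - (q ^ j))"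

lemma qpoch_lead_coeff_Suc: "qpoch_lead_coeff q (Suc n) = qpoch_lead_coeff q n * (- (q ^ n))"
  by (simp add: qpoch_lead_coeff_def)

lemma norm_qpoch_lead_coeff_le:
  "0 \<le> e \<Longrightarrow> norm (qpoch_lead_coeff q n) \<le> (\<Prod>j<n. e + norm q ^ j)"
  unfolding qpoch_lead_coeff_def prod_norm[symmetric]
  by (rule prod_mono) (auto simp: norm_power)

lemma summable_power_mult_prod_sq:
  assumes q: "norm q < 1" and e: "0 < e" and K: "0 \<le> K" "4 * K * e ^ 2 < 1"
  shows "summable (\<lambda>n. K ^ n * (\<Prod>j<n. e + norm q ^ j) ^ 2)"
proof -
  have "(\<lambda>n. norm q ^ n) \<longlonglongrightarrow> 0" using q by (intro LIMSEQ_power_zero) auto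
  then obtain N where N: "\<And>n. n \<ge> N \<Longrightarrow> norm q ^ n < e"
    using e by (metis (full_types) eventually_sequentially order_tendstoD(2))
  show ?thesis
  proof (rule summable_ratio_test[OF K(2)])
    fix n assume n: "n \<ge> N"
    define P where "P = (\<Prod>j<n. e + norm q ^ j)"
    have "K * (e + norm q ^ n) ^ 2 \<le> K * (2 * e) ^ 2"
      using N[OF n] e K by (intro mult_left_mono power_mono) auto
    then have "K ^ n * P ^ 2 * (K * (e + norm q ^ n) ^ 2) \<le> K ^ n * P ^ 2 * (K * (2 * e) ^ 2)"
      by (rule mult_left_mono) (use K in simp)
    moreover have "P \<ge> 0" unfolding P_def using e by (intro prod_nonneg) auto
    ultimately show "norm (K ^ Suc n * (\<Prod>j<Suc n. e + norm q ^ j) ^ 2)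
          \<le> 4 * K * e ^ 2 * norm (K ^ n * (\<Prod>j<n. e + norm q ^ j) ^ 2)"
      using K e by (simp add: P_def[symmetric] abs_mult power_mult_distrib algebra_simps power2_eq_square)
  qed
qed

lemma ex_small_eps:
  fixes K :: real
  assumes "0 \<le> K"
  shows "\<exists>e>0. 4 * K * e ^ 2 < 1"
proof -
  define e where "e = 1 / (2 * (K + 1))"
  have "e ^ 2 = 1 / (4 * (K + 1) ^ 2)"
    by (simp add: e_def power_divide power2_eq_square algebra_simps)
  then have "4 * K * e ^ 2 = K / (K + 1) ^ 2"
    by simp
  also have "\<dots> < 1"
  proof -
    have "(K + 1) ^ 2 = K ^ 2 + K + (K + 1)"
      by (simp add: power2_eq_square algebra_simps)
    then show ?thesis
      using assms by (simp add: divide_less_eq) (smt (verit) zero_le_power2)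
  qed
  finally show ?thesis
    using assms by (intro exI[of _ e]) (simp add: e_def)
qed

lemma summable_power_mult_qpoch_lead_coeff_sq:
  assumes "norm q < 1"
  shows "summable (\<lambda>n. norm v ^ n * norm (qpoch_lead_coeff q n) ^ 2)"
proof -
  obtain e where e: "0 < e" "4 * norm v * e ^ 2 < 1" using ex_small_eps[of "norm v"] by auto
  show ?thesis
  proof (rule summable_comparison_test[OF _ summable_power_mult_prod_sq[OF assms e(1) _ e(2)]])
    show "\<exists>N. \<forall>n\<ge>N. norm (norm v ^ n * norm (qpoch_lead_coeff q n) ^ 2)
                \<le> norm v ^ n * (\<Prod>j<n. e + norm q ^ j) ^ 2"
      using e by (auto intro!: mult_left_mono power_mono norm_qpoch_lead_coeff_le)
  qed simp
qed

definition xfactor :: "complex \<Rightarrow> complex \<Rightarrow> complex \<Rightarrow> nat \<Rightarrow> complex" where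
  "xfactor u q x n = qpoch x q n / (qpoch (u * q / x) q n * x ^ n)"

lemma xfactor_tendsto: "((\<lambda>x. xfactor u q x n) \<longlongrightarrow> qpoch_lead_coeff q n) at_infinity"
proof -
  have "\<forall>\<^sub>F x in at_infinity. x \<noteq> 0"
    using eventually_at_infinity[of "\<lambda>x. x \<noteq> 0"] by (metis norm_zero zero_less_one not_le)
  then have "\<forall>\<^sub>F x in at_infinity.
      (\<Prod>j<n. inverse x - q ^ j) / qpoch (u * q * inverse x) q n = xfactor u q x n"
  proof eventually_elim
    case (elim x)
    show ?case
      unfolding qpoch_div_power[OF elim, symmetric] by (simp add: xfactor_def field_simps)
  qed
  moreover have "((\<lambda>x. (\<Prod>j<n. inverse x - q ^ j) / qpoch (u * q * inverse x) q n)
      \<longlongrightarrow> (\<Prod>j<n. 0 - q ^ j) / qpoch (u * q * 0) q n) at_infinity"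
    by (intro tendsto_intros tendsto_inverse_0) simp
  ultimately show ?thesis
    by (simp add: qpoch_lead_coeff_def tendsto_cong)
qed

lemma norm_qpoch_div_power_le:
  assumes "x \<noteq> 0" and "norm (inverse x) \<le> e"
  shows "norm (qpoch x q n / x ^ n) \<le> (\<Prod>j<n. e + norm q ^ j)"
  unfolding qpoch_div_power[OF assms(1)] prod_norm[symmetric]
proof (rule prod_mono)
  fix j
  show "0 \<le> norm (inverse x - q ^ j) \<and> norm (inverse x - q ^ j) \<le> e + norm q ^ j"
    using norm_triangle_ineq4[of "inverse x" "q ^ j"] assms(2) by (simp add: norm_power)
qed

lemma xfactor_eventually_bounded:
  assumes q: "norm q < 1" and e: "0 < e"
  shows "\<forall>\<^sub>F x in at_infinity.
           \<forall>n. norm (xfactor u q x n) \<le> exp (1 / (1 - norm q)) * (\<Prod>j<n. e + norm q ^ j)"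
proof -
  have inv: "((\<lambda>x::complex. inverse x) \<longlongrightarrow> 0) at_infinity"
    by (rule tendsto_inverse_0)
  have "((\<lambda>x. u * q * inverse x) \<longlongrightarrow> u * q * 0) at_infinity"
    by (intro tendsto_intros inv)
  then have "\<forall>\<^sub>F x in at_infinity. norm (u * q * inverse x) < 1/2"
    using tendstoD[of _ "u * q * 0" _ "1/2"] by simp
  moreover have "\<forall>\<^sub>F x in at_infinity. norm (inverse (x::complex)) < e"
    using tendstoD[OF inv e] by simp
  moreover have "\<forall>\<^sub>F x in at_infinity. x \<noteq> 0"
    using eventually_at_infinity[of "\<lambda>x. x \<noteq> 0"] by (metis norm_zero zero_less_one not_le)
  ultimately show ?thesis
  proof eventually_elim
    case (elim x)
    have small: "norm (u * q / x) \<le> 1/2"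
      using elim(1) unfolding divide_inverse by linarith
    show ?case
    proof
      fix n
      have "norm (1 / qpoch (u * q / x) q n) \<le> exp (2 * norm (u * q / x) / (1 - norm q))"
        by (rule norm_inverse_qpoch_le[OF q small])
      also have "\<dots> \<le> exp (1 / (1 - norm q))"
        using small q by (intro exp_mono divide_right_mono) auto
      finally have inverse_bound: "norm (1 / qpoch (u * q / x) q n) \<le> exp (1 / (1 - norm q))" .
      have "norm (xfactor u q x n) = norm (1 / qpoch (u * q / x) q n) * norm (qpoch x q n / x ^ n)"
        by (simp add: xfactor_def norm_divide norm_mult)
      also have "\<dots> \<le> exp (1 / (1 - norm q)) * (\<Prod>j<n. e + norm q ^ j)"
        using elim(3) less_imp_le[OF elim(2)]
        by (intro mult_mono inverse_bound norm_qpoch_div_power_le) auto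
      finally show "norm (xfactor u q x n) \<le> exp (1 / (1 - norm q)) * (\<Prod>j<n. e + norm q ^ j)" .
    qed
  qed
qed

section \<open>Dominated double series\<close>

lemma summable_suminf_dominated:
  fixes f :: "nat \<Rightarrow> nat \<Rightarrow> 'a::banach"
  assumes bound: "\<And>n k. norm (f n k) \<le> g n * h k" and g: "summable g" and h: "summable h"
  shows "summable (\<lambda>k. \<Sum>n. f n k)"
proof (rule summable_comparison_test[OF _ summable_mult[OF h, of "suminf g"]])
  have "norm (\<Sum>n. f n k) \<le> suminf g * h k" for k
  proof -
    have "norm (\<Sum>n. f n k) \<le> (\<Sum>n. g n * h k)"
      by (rule norm_suminf_le[OF bound summable_mult2[OF g]])
    also have "\<dots> = suminf g * h k"
      by (rule suminf_mult2[OF g, symmetric])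
    finally show ?thesis .
  qed
  then show "\<exists>N. \<forall>k\<ge>N. norm (\<Sum>n. f n k) \<le> suminf g * h k"
    by blast
qed

lemma suminf_swap_dominated:
  fixes f :: "nat \<Rightarrow> nat \<Rightarrow> 'a::{real_normed_algebra,banach}"
  assumes bound: "\<And>n k. norm (f n k) \<le> g n * h k"
    and g: "summable g" "\<And>n. 0 \<le> g n" and h: "summable h" "\<And>k. 0 \<le> h k"
  shows "(\<Sum>n. \<Sum>k. f n k) = (\<Sum>k. \<Sum>n. f n k)"
proof -
  have "(\<lambda>K. \<Sum>n. \<Sum>k<K. f n k) \<longlonglongrightarrow> (\<Sum>n. \<Sum>k. f n k)"
  proof (rule tannerys_theorem[THEN conjunct2, THEN conjunct2])
    show "(\<lambda>K. \<Sum>k<K. f n k) \<longlonglongrightarrow> (\<Sum>k. f n k)" for n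
      by (rule summable_LIMSEQ[OF summable_comparison_test[OF _ summable_mult[OF h(1), of "g n"]]])
        (use bound in auto)
    have "norm (\<Sum>k<K. f n k) \<le> g n * suminf h" for n K
    proof -
      have "norm (\<Sum>k<K. f n k) \<le> (\<Sum>k<K. g n * h k)"
        by (rule order_trans[OF norm_sum sum_mono[OF bound]])
      also have "\<dots> \<le> g n * suminf h"
        unfolding sum_distrib_left[symmetric] by (intro mult_left_mono sum_le_suminf h g) auto
      finally show ?thesis .
    qed
    then show "\<forall>\<^sub>F (n, K) in sequentially \<times>\<^sub>F sequentially. norm (\<Sum>k<K. f n k) \<le> g n * suminf h"
      by (simp add: case_prod_unfold)
    show "summable (\<lambda>n. g n * suminf h)"
      by (rule summable_mult2[OF g(1)])
  qed simp
  moreover have "(\<Sum>n. \<Sum>k<K. f n k) = (\<Sum>k<K. \<Sum>n. f n k)" for K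
  proof (rule suminf_sum)
    show "summable (\<lambda>n. f n k)" for k
      by (rule summable_comparison_test[OF _ summable_mult2[OF g(1), of "h k"]]) (use bound in auto)
  qed
  ultimately have "(\<lambda>K. \<Sum>k<K. \<Sum>n. f n k) \<longlonglongrightarrow> (\<Sum>n. \<Sum>k. f n k)"
    by simp
  moreover have "(\<lambda>K. \<Sum>k<K. \<Sum>n. f n k) \<longlonglongrightarrow> (\<Sum>k. \<Sum>n. f n k)"
    by (rule summable_LIMSEQ[OF summable_suminf_dominated[OF bound g(1) h(1)]])
  ultimately show ?thesis
    using LIMSEQ_unique by blast
qed

section \<open>A telescoping family of well-poised series\<close>

(* Sum_n wp_term 0 n is the limit c, d -> infinity of Rogers' 6phi5 sum with a = u, b = p. *)
locale well_poised_limit =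
  fixes u v p q :: complex
  assumes q: "norm q < 1" and pv: "p * v = u * q"
    and u: "\<And>j. u * q ^ j \<noteq> 1" and v: "\<And>j. v * q ^ j \<noteq> 1"
begin

definition wp_weight :: "nat \<Rightarrow> nat \<Rightarrow> complex" where
  "wp_weight k n = qpoch u q (n + k) / qpoch v q (n + k) * qpoch p q n / qpoch q q n
     * qpoch_lead_coeff q n ^ 2 * v ^ n * q ^ (n * k)"

definition wp_term :: "nat \<Rightarrow> nat \<Rightarrow> complex" where
  "wp_term k n = wp_weight k n * (1 - u * q ^ (2 * n + k))"

definition wp_tail :: "nat \<Rightarrow> nat \<Rightarrow> complex" where
  "wp_tail k n = wp_weight k n * (1 - q ^ n)"

lemma wp_weight_Suc_left:
  "wp_weight (Suc k) n = wp_weight k n * ((1 - u * q ^ (n + k)) / (1 - v * q ^ (n + k))) * q ^ n"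
  unfolding wp_weight_def add_Suc_right qpoch_Suc mult_Suc_right power_add
  by (simp add: divide_inverse inverse_mult_distrib mult_ac)

lemma wp_weight_Suc_right:
  "wp_weight k (Suc n) = wp_weight k n * ((1 - u * q ^ (n + k)) / (1 - v * q ^ (n + k)))
     * ((1 - p * q ^ n) / (1 - q * q ^ n)) * (q ^ n) ^ 2 * v * q ^ k"
  unfolding wp_weight_def add_Suc qpoch_Suc mult_Suc qpoch_lead_coeff_Suc power_add
  by (simp add: divide_inverse inverse_mult_distrib power_mult_distrib mult_ac)

lemma wp_term_telescope: "wp_term k n - wp_term (Suc k) n = wp_tail k n - wp_tail k (Suc n)"
proof -
  define X Y where "X = q ^ n" and "Y = q ^ k"
  define R F where "R = (1 - u * (X * Y)) / (1 - v * (X * Y))" and "F = (1 - p * X) / (1 - q * X)"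
  have pow: "q ^ (n + k) = X * Y" "q ^ (2 * n + k) = X ^ 2 * Y" "q ^ (2 * n + Suc k) = X ^ 2 * Y * q"
    "q ^ Suc n = q * X"
    by (simp_all add: X_def Y_def power_add mult.commute flip: power_mult)
  have "1 - q * X \<noteq> 0"
    using mult_power_neq_one[OF q, of n] by (simp add: X_def)
  then have F: "F * (1 - q * X) = 1 - p * X"
    by (simp add: F_def)
  have "1 - v * (X * Y) \<noteq> 0"
    using v[of "n + k"] by (simp add: pow)
  moreover have "(1 - u * (X ^ 2 * Y)) * (1 - v * (X * Y)) - (1 - u * (X * Y)) * X * (1 - u * (X ^ 2 * Y * q))
      = (1 - X) * (1 - v * (X * Y)) - (1 - u * (X * Y)) * (1 - p * X) * X ^ 2 * v * Y"
    using pv by algebra \<comment> \<open>the only use of \<open>p * v = u * q\<close>\<close>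
  ultimately have "(1 - u * (X ^ 2 * Y)) - R * X * (1 - u * (X ^ 2 * Y * q))
      = (1 - X) - R * (1 - p * X) * X ^ 2 * v * Y"
    unfolding R_def by (simp add: field_simps)
  then have "wp_weight k n * ((1 - u * (X ^ 2 * Y)) - R * X * (1 - u * (X ^ 2 * Y * q)))
      = wp_weight k n * ((1 - X) - R * (F * (1 - q * X)) * X ^ 2 * v * Y)"
    by (simp only: F)
  then show ?thesis
    unfolding wp_term_def wp_tail_def wp_weight_Suc_left wp_weight_Suc_right pow
      X_def[symmetric] Y_def[symmetric] R_def[symmetric] F_def[symmetric]
    by (simp add: algebra_simps)
qed

definition majorant :: "nat \<Rightarrow> real" where
  "majorant n = norm v ^ n * norm (qpoch_lead_coeff q n) ^ 2"

lemma majorant_nonneg: "0 \<le> majorant n"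
  by (simp add: majorant_def)

lemma summable_majorant: "summable majorant"
  unfolding majorant_def by (rule summable_power_mult_qpoch_lead_coeff_sq[OF q])

lemma wp_weight_bound:
  obtains K where "0 < K" "\<And>k n. norm (wp_weight k n) \<le> K * majorant n"
proof -
  obtain R1 where R1: "0 < R1" "\<And>m. norm (qpoch u q m / qpoch v q m) \<le> R1"
    using Bseq_qpoch_ratio[OF q v] by (blast dest: BseqD)
  obtain R2 where R2: "0 < R2" "\<And>m. norm (qpoch p q m / qpoch q q m) \<le> R2"
    using Bseq_qpoch_ratio[OF q mult_power_neq_one[OF q]] by (blast dest: BseqD)
  have "norm (wp_weight k n) \<le> R1 * R2 * majorant n" for k n
  proof -
    have "norm (wp_weight k n) = norm (qpoch u q (n + k) / qpoch v q (n + k))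
        * norm (qpoch p q n / qpoch q q n) * majorant n * norm q ^ (n * k)"
      by (simp add: wp_weight_def majorant_def norm_mult norm_divide norm_power)
    also have "\<dots> \<le> R1 * R2 * majorant n * 1"
      using q R1(1) R2(1) majorant_nonneg[of n] by (intro mult_mono R1 R2 power_le_one) auto
    finally show ?thesis by simp
  qed
  with R1 R2 show ?thesis
    using that[of "R1 * R2"] by auto
qed

lemma wp_term_bound:
  obtains K where "0 < K" "\<And>k n. norm (wp_term k n) \<le> K * majorant n"
proof -
  obtain K where K: "0 < K" "\<And>k n. norm (wp_weight k n) \<le> K * majorant n"
    using wp_weight_bound by blast
  have "norm (wp_term k n) \<le> K * (1 + norm u) * majorant n" for k n
  proof -
    have "norm (wp_term k n) = norm (wp_weight k n) * norm (1 - u * q ^ (2 * n + k))"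
      by (simp add: wp_term_def norm_mult)
    also have "\<dots> \<le> K * majorant n * (1 + norm u)"
      using q K majorant_nonneg[of n] by (intro mult_mono norm_one_minus_mult_power_le) auto
    finally show ?thesis by (simp add: mult_ac)
  qed
  then show ?thesis
    using that[of "K * (1 + norm u)"] K by (simp add: add_pos_nonneg)
qed

lemma summable_wp_term: "summable (wp_term k)"
proof -
  obtain K where "0 < K" "\<And>k n. norm (wp_term k n) \<le> K * majorant n"
    using wp_term_bound by blast
  then show ?thesis
    by (intro summable_comparison_test[OF _ summable_mult[OF summable_majorant]]) auto
qed

lemma wp_tail_LIMSEQ: "wp_tail k \<longlonglongrightarrow> 0"
proof -
  obtain K where K: "0 < K" "\<And>k n. norm (wp_weight k n) \<le> K * majorant n"
    using wp_weight_bound by blast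
  have bound: "norm (wp_tail k n) \<le> K * majorant n * 2" for n
  proof -
    have "norm (1 - q ^ n) \<le> 2"
      using norm_one_minus_mult_power_le[of q 1 n] q by simp
    then show ?thesis
      unfolding wp_tail_def norm_mult using K majorant_nonneg[of n] by (intro mult_mono) auto
  qed
  have "(\<lambda>n. K * majorant n * 2) \<longlonglongrightarrow> K * 0 * 2"
    by (intro tendsto_mult_right tendsto_mult_left summable_LIMSEQ_zero summable_majorant)
  then have "(\<lambda>n. K * majorant n * 2) \<longlonglongrightarrow> 0"
    by simp
  then show ?thesis
    by (rule Lim_null_comparison[OF always_eventually, rotated]) (use bound in blast)
qed

lemma suminf_wp_term_Suc: "suminf (wp_term (Suc k)) = suminf (wp_term k)"
proof -
  have "(\<lambda>n. wp_term k n - wp_term (Suc k) n) sums (suminf (wp_term k) - suminf (wp_term (Suc k)))"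
    by (intro sums_diff summable_sums summable_wp_term)
  moreover have "(\<lambda>n. wp_term k n - wp_term (Suc k) n) sums (wp_tail k 0 - 0)"
    unfolding wp_term_telescope by (rule telescope_sums'[OF wp_tail_LIMSEQ[of k]])
  ultimately have "suminf (wp_term k) - suminf (wp_term (Suc k)) = wp_tail k 0 - 0"
    by (rule sums_unique2)
  then show ?thesis
    by (simp add: wp_tail_def)
qed

lemma wp_term_LIMSEQ:
  "(\<lambda>k. wp_term k n) \<longlonglongrightarrow> (if n = 0 then (1 - u) * qpoch_inf (u * q) q / qpoch_inf v q else 0)"
proof (cases n)
  case 0
  have "wp_term k 0 = (1 - u) * qpoch (u * q) q k / qpoch v q k" for k
    by (simp add: wp_term_def wp_weight_def qpoch_lead_coeff_def qpoch_shift)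
  moreover have "(\<lambda>k. (1 - u) * qpoch (u * q) q k / qpoch v q k)
      \<longlonglongrightarrow> (1 - u) * qpoch_inf (u * q) q / qpoch_inf v q"
    by (intro tendsto_mult tendsto_divide tendsto_const qpoch_LIMSEQ[OF q] qpoch_inf_nonzero[OF q v])
  ultimately show ?thesis
    using 0 by simp
next
  case (Suc m)
  define c where "c = qpoch p q n / qpoch q q n * qpoch_lead_coeff q n ^ 2 * v ^ n"
  have "wp_term k n = qpoch u q (n + k) / qpoch v q (n + k) * c * (1 - u * q ^ (2 * n) * q ^ k) * (q ^ n) ^ k"
    for k
    by (simp add: wp_term_def wp_weight_def c_def power_add mult_ac flip: power_mult)
  moreover have "(\<lambda>k. qpoch u q (n + k) / qpoch v q (n + k) * c * (1 - u * q ^ (2 * n) * q ^ k) * (q ^ n) ^ k)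
      \<longlonglongrightarrow> qpoch_inf u q / qpoch_inf v q * c * (1 - u * q ^ (2 * n) * 0) * 0"
  proof -
    have shift: "(\<lambda>k. qpoch t q (n + k)) \<longlonglongrightarrow> qpoch_inf t q" for t
      using LIMSEQ_ignore_initial_segment[OF qpoch_LIMSEQ[OF q], of t n] by (simp add: add.commute)
    have "norm (q ^ n) < 1"
      using norm_mult_power_less_one[OF q] Suc by simp
    then show ?thesis
      by (intro tendsto_mult tendsto_divide tendsto_diff tendsto_const shift LIMSEQ_power_zero
          qpoch_inf_nonzero[OF q v] q)
  qed
  ultimately show ?thesis
    using Suc by simp
qed

lemma suminf_wp_term: "suminf (wp_term k) = (1 - u) * qpoch_inf (u * q) q / qpoch_inf v q"
proof -
  define L where "L = (1 - u) * qpoch_inf (u * q) q / qpoch_inf v q"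
  obtain K where K: "0 < K" "\<And>k n. norm (wp_term k n) \<le> K * majorant n"
    using wp_term_bound by blast
  have const: "suminf (wp_term k) = suminf (wp_term 0)" for k
    by (induction k) (simp_all add: suminf_wp_term_Suc)
  have "(\<lambda>k. suminf (wp_term k)) \<longlonglongrightarrow> (\<Sum>n. if n = 0 then L else 0)"
  proof (rule tannerys_theorem[THEN conjunct2, THEN conjunct2])
    show "(\<lambda>k. wp_term k n) \<longlonglongrightarrow> (if n = 0 then L else 0)" for n
      unfolding L_def by (rule wp_term_LIMSEQ)
    show "\<forall>\<^sub>F (n, k) in sequentially \<times>\<^sub>F sequentially. norm (wp_term k n) \<le> K * majorant n"
      using K by (simp add: case_prod_unfold)
    show "summable (\<lambda>n. K * majorant n)"
      by (intro summable_mult summable_majorant)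
  qed simp
  also have "(\<Sum>n. if n = 0 then L else 0) = L"
    using sums_single[of 0 "\<lambda>_. L"] by (simp add: sums_iff)
  also have "(\<lambda>k. suminf (wp_term k)) = (\<lambda>_. suminf (wp_term 0))"
    by (rule ext) (rule const)
  finally have "suminf (wp_term 0) = L"
    by (rule LIMSEQ_const_iff[THEN iffD1])
  then show ?thesis
    unfolding const[of k] L_def .
qed

end

locale wp_expansion = well_poised_limit +
  fixes w :: complex and As Bs :: "complex list"
  assumes w: "norm w < 1"
    and Bs: "\<And>b j. b \<in> set Bs \<Longrightarrow> b * q ^ j \<noteq> 1"
begin

definition outer_coeff :: "nat \<Rightarrow> complex" where
  "outer_coeff n = qpoch u q n * qpoch (csqrt u * q) q n * qpoch (- csqrt u * q) q n * qpoch p q n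
     / (qpoch q q n * qpoch (csqrt u) q n * qpoch (- csqrt u) q n * qpoch v q n) * v ^ n"

definition inner_term :: "nat \<Rightarrow> nat \<Rightarrow> complex" where
  "inner_term n k = (\<Prod>a\<leftarrow>u * q ^ n # u * q ^ (2 * n + 1) # As. qpoch a q k)
     / (qpoch q q k * (\<Prod>b\<leftarrow>v * q ^ n # u * q ^ (2 * n) # Bs. qpoch b q k)) * (w * q ^ n) ^ k"

definition phi_coeff :: "nat \<Rightarrow> complex" where
  "phi_coeff k = (\<Prod>a\<leftarrow>As. qpoch a q k) / (\<Prod>b\<leftarrow>q # Bs. qpoch b q k)"

lemma qphi_eq_suminf_phi_coeff: "qphi As Bs q w = (\<Sum>k. phi_coeff k * w ^ k)"
  by (simp add: qphi_def phi_coeff_def)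

lemma outer_coeff_eq:
  "outer_coeff n = qpoch u q n / qpoch v q n * (qpoch p q n / qpoch q q n) * v ^ n
     * ((1 - u * q ^ (2 * n)) / (1 - u))"
proof -
  have "outer_coeff n = qpoch u q n / qpoch v q n * (qpoch p q n / qpoch q q n) * v ^ n
      * (qpoch (csqrt u * q) q n * qpoch (- csqrt u * q) q n / (qpoch (csqrt u) q n * qpoch (- csqrt u) q n))"
    by (simp add: outer_coeff_def divide_inverse inverse_mult_distrib mult_ac)
  then show ?thesis
    by (simp only: qpoch_plus_minus_sqrt[OF power2_csqrt u])
qed

lemma Bseq_phi_coeff: "Bseq phi_coeff"
  unfolding phi_coeff_def
  by (rule Bseq_qpoch_quotient[OF q]) (auto simp: mult_power_neq_one[OF q] Bs)

lemma inner_term_eq: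
  "inner_term n k = qpoch (u * q ^ n) q k / qpoch (v * q ^ n) q k
     * ((1 - u * q ^ (2 * n + k)) / (1 - u * q ^ (2 * n))) * phi_coeff k * (w * q ^ n) ^ k"
proof -
  have "(1 - u * q ^ (2 * n)) * qpoch (u * q ^ (2 * n + 1)) q k
      = qpoch (u * q ^ (2 * n)) q k * (1 - u * q ^ (2 * n + k))"
    using qpoch_shift[of "u * q ^ (2 * n)" q k] by (simp add: power_add mult_ac)
  then have "qpoch (u * q ^ (2 * n + 1)) q k / qpoch (u * q ^ (2 * n)) q k
      = (1 - u * q ^ (2 * n + k)) / (1 - u * q ^ (2 * n))"
    using qpoch_shifted_nonzero[OF u, of "2 * n" k] u[of "2 * n"]
    by (simp add: field_simps)
  then show ?thesis
    by (simp add: inner_term_def phi_coeff_def divide_inverse inverse_mult_distrib mult_ac)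
qed

lemma outer_coeff_bound:
  obtains C where "0 < C" "\<And>n. norm (outer_coeff n) \<le> C * norm v ^ n"
proof -
  obtain R1 where R1: "0 < R1" "\<And>m. norm (qpoch u q m / qpoch v q m) \<le> R1"
    using Bseq_qpoch_ratio[OF q v] by (blast dest: BseqD)
  obtain R2 where R2: "0 < R2" "\<And>m. norm (qpoch p q m / qpoch q q m) \<le> R2"
    using Bseq_qpoch_ratio[OF q mult_power_neq_one[OF q]] by (blast dest: BseqD)
  define C where "C = R1 * R2 * ((1 + norm u) / norm (1 - u))"
  have "0 < C"
    using R1 R2 u[of 0] by (simp add: C_def add_pos_nonneg)
  moreover have "norm (outer_coeff n) \<le> C * norm v ^ n" for n
  proof -
    have "norm (outer_coeff n) = norm (qpoch u q n / qpoch v q n) * norm (qpoch p q n / qpoch q q n)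
        * norm v ^ n * (norm (1 - u * q ^ (2 * n)) / norm (1 - u))"
      by (simp add: outer_coeff_eq norm_mult norm_divide norm_power)
    also have "\<dots> \<le> R1 * R2 * norm v ^ n * ((1 + norm u) / norm (1 - u))"
      using q R1 R2
      by (intro mult_mono divide_right_mono norm_one_minus_mult_power_le) auto
    finally show ?thesis
      by (simp add: C_def mult_ac)
  qed
  ultimately show ?thesis
    using that by blast
qed

lemma qpoch_shifted_ratio:
  "qpoch (u * q ^ n) q k / qpoch (v * q ^ n) q k
     = qpoch u q (n + k) / qpoch v q (n + k) * (qpoch v q n / qpoch u q n)"
  using qpoch_nonzero[OF u, of n] qpoch_nonzero[OF v, of n] by (simp add: qpoch_add)

lemma inner_term_bound:
  obtains D where "0 < D" "\<And>n k. norm (inner_term n k) \<le> D * norm w ^ k"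
proof -
  obtain R1 where R1: "0 < R1" "\<And>m. norm (qpoch u q m / qpoch v q m) \<le> R1"
    using Bseq_qpoch_ratio[OF q v] by (blast dest: BseqD)
  obtain R2 where R2: "0 < R2" "\<And>m. norm (qpoch v q m / qpoch u q m) \<le> R2"
    using Bseq_qpoch_ratio[OF q u] by (blast dest: BseqD)
  obtain S where S: "0 < S" "\<And>m. norm (1 / (1 - u * q ^ m)) \<le> S"
    using Bseq_inverse_one_minus_mult_power[OF q u] by (blast dest: BseqD)
  obtain P where P: "0 < P" "\<And>k. norm (phi_coeff k) \<le> P"
    using Bseq_phi_coeff by (blast dest: BseqD)
  define D where "D = R1 * R2 * ((1 + norm u) * S) * P"
  have "0 < D"
    using R1 R2 S P by (simp add: D_def add_pos_nonneg)
  moreover have "norm (inner_term n k) \<le> D * norm w ^ k" for n k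
  proof -
    have "norm (qpoch (u * q ^ n) q k / qpoch (v * q ^ n) q k) \<le> R1 * R2"
      unfolding qpoch_shifted_ratio norm_mult using R1 by (intro mult_mono R1(2) R2(2)) auto
    moreover have "norm ((1 - u * q ^ (2 * n + k)) / (1 - u * q ^ (2 * n))) \<le> (1 + norm u) * S"
      using q S norm_one_minus_mult_power_le[of q u "2 * n + k"]
      by (simp add: divide_inverse norm_mult) (intro mult_mono, auto simp: norm_divide)
    moreover have "norm ((w * q ^ n) ^ k) \<le> norm w ^ k"
      using q by (simp add: norm_mult norm_power power_mult_distrib mult_left_le power_le_one)
    ultimately have "norm (inner_term n k) \<le> R1 * R2 * ((1 + norm u) * S) * P * norm w ^ k"
      unfolding inner_term_eq norm_mult using R1(1) R2(1) S(1) P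
      by (intro mult_mono) (auto simp: add_pos_nonneg)
    then show ?thesis
      by (simp add: D_def)
  qed
  ultimately show ?thesis
    using that by blast
qed

lemma summable_inner_term: "summable (inner_term n)"
proof -
  obtain D where "0 < D" "\<And>n k. norm (inner_term n k) \<le> D * norm w ^ k"
    using inner_term_bound by blast
  then show ?thesis
    using w by (intro summable_comparison_test[OF _ summable_mult[OF summable_geometric]]) auto
qed

lemma inner_sum_bound:
  obtains D where "0 < D" "\<And>n. norm (suminf (inner_term n)) \<le> D"
proof -
  obtain D where D: "0 < D" "\<And>n k. norm (inner_term n k) \<le> D * norm w ^ k"
    using inner_term_bound by blast
  have "norm (suminf (inner_term n)) \<le> D * (1 / (1 - norm w))" for n
  proof -
    have "norm (suminf (inner_term n)) \<le> (\<Sum>k. D * norm w ^ k)"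
      using w by (intro norm_suminf_le D(2) summable_mult summable_geometric) auto
    also have "\<dots> = D * (1 / (1 - norm w))"
      using w by (simp add: suminf_mult suminf_geometric summable_geometric)
    finally show ?thesis .
  qed
  then show ?thesis
    using that[of "D * (1 / (1 - norm w))"] D w by simp
qed

lemma outer_inner_eq_wp_term:
  "outer_coeff n * qpoch_lead_coeff q n ^ 2 * inner_term n k = phi_coeff k * w ^ k * wp_term k n / (1 - u)"
proof -
  have "outer_coeff n * qpoch_lead_coeff q n ^ 2 * inner_term n k
      = (qpoch u q n / qpoch v q n * (qpoch v q n / qpoch u q n))
        * ((1 - u * q ^ (2 * n)) * ((1 - u * q ^ (2 * n + k)) / (1 - u * q ^ (2 * n))))
        * (phi_coeff k * w ^ k * (qpoch u q (n + k) / qpoch v q (n + k) * qpoch p q n / qpoch q q n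
           * qpoch_lead_coeff q n ^ 2 * v ^ n * q ^ (n * k)) / (1 - u))"
    unfolding outer_coeff_eq inner_term_eq qpoch_shifted_ratio
    by (simp add: divide_inverse inverse_mult_distrib power_mult_distrib mult_ac flip: power_mult)
  also have "\<dots> = phi_coeff k * w ^ k * wp_term k n / (1 - u)"
    using qpoch_nonzero[OF u, of n] qpoch_nonzero[OF v, of n] u[of "2 * n"]
    by (simp add: wp_term_def wp_weight_def)
  finally show ?thesis .
qed

lemma summable_phi_term: "summable (\<lambda>k. phi_coeff k * w ^ k)"
proof -
  obtain P where P: "0 < P" "\<And>k. norm (phi_coeff k) \<le> P"
    using Bseq_phi_coeff by (blast dest: BseqD)
  show ?thesis
  proof (rule summable_comparison_test)
    show "\<exists>N. \<forall>k\<ge>N. norm (phi_coeff k * w ^ k) \<le> P * norm w ^ k"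
      using P by (auto simp: norm_mult norm_power intro!: mult_right_mono)
    show "summable (\<lambda>k. P * norm w ^ k)"
      using w by (intro summable_mult summable_geometric) simp
  qed
qed

lemma outer_inner_bound:
  obtains g h where "summable g" "\<And>n. 0 \<le> g n" "summable h" "\<And>k. 0 \<le> h k"
    "\<And>n k. norm (outer_coeff n * qpoch_lead_coeff q n ^ 2 * inner_term n k) \<le> g n * h k"
proof -
  obtain K where K: "0 < K" "\<And>k n. norm (wp_term k n) \<le> K * majorant n"
    using wp_term_bound by blast
  obtain P where P: "0 < P" "\<And>k. norm (phi_coeff k) \<le> P"
    using Bseq_phi_coeff by (blast dest: BseqD)
  have "norm (outer_coeff n * qpoch_lead_coeff q n ^ 2 * inner_term n k)
      \<le> K * majorant n / norm (1 - u) * (P * norm w ^ k)" for n k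
  proof -
    have "norm (phi_coeff k * w ^ k * wp_term k n / (1 - u))
        = norm (phi_coeff k) * norm (wp_term k n) * norm w ^ k / norm (1 - u)"
      by (simp add: norm_mult norm_divide norm_power mult_ac)
    also have "\<dots> \<le> P * (K * majorant n) * norm w ^ k / norm (1 - u)"
      using K P by (intro divide_right_mono mult_right_mono mult_mono) auto
    also have "\<dots> = K * majorant n / norm (1 - u) * (P * norm w ^ k)"
      by (simp add: divide_inverse mult_ac)
    finally show ?thesis
      unfolding outer_inner_eq_wp_term .
  qed
  moreover have "summable (\<lambda>n. K * majorant n / norm (1 - u))"
    by (intro summable_divide summable_mult summable_majorant)
  moreover have "summable (\<lambda>k. P * norm w ^ k)"
    using w by (intro summable_mult summable_geometric) simp
  ultimately show ?thesis
    using K P majorant_nonneg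
    by (intro that[of "\<lambda>n. K * majorant n / norm (1 - u)" "\<lambda>k. P * norm w ^ k"]) auto
qed

lemma suminf_outer_inner_column:
  "(\<Sum>n. outer_coeff n * qpoch_lead_coeff q n ^ 2 * inner_term n k)
     = phi_coeff k * w ^ k * (qpoch_inf (u * q) q / qpoch_inf v q)"
proof -
  have "(\<Sum>n. phi_coeff k * w ^ k * wp_term k n / (1 - u)) = phi_coeff k * w ^ k * suminf (wp_term k) / (1 - u)"
    by (simp add: suminf_divide suminf_mult summable_mult summable_wp_term)
  then show ?thesis
    using u[of 0] by (simp add: outer_inner_eq_wp_term suminf_wp_term)
qed

lemma suminf_outer_lead:
  "(\<Sum>n. outer_coeff n * qpoch_lead_coeff q n ^ 2 * suminf (inner_term n))
     = qpoch_inf (u * q) q / qpoch_inf v q * qphi As Bs q w"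
proof -
  obtain g h where gh: "summable g" "\<And>n. 0 \<le> g n" "summable h" "\<And>k. 0 \<le> h k"
    "\<And>n k. norm (outer_coeff n * qpoch_lead_coeff q n ^ 2 * inner_term n k) \<le> g n * h k"
    using outer_inner_bound by blast
  have "(\<Sum>n. outer_coeff n * qpoch_lead_coeff q n ^ 2 * suminf (inner_term n))
      = (\<Sum>n. \<Sum>k. outer_coeff n * qpoch_lead_coeff q n ^ 2 * inner_term n k)"
    by (simp add: suminf_mult summable_inner_term)
  also have "\<dots> = (\<Sum>k. \<Sum>n. outer_coeff n * qpoch_lead_coeff q n ^ 2 * inner_term n k)"
    by (rule suminf_swap_dominated[OF gh(5) gh(1,2) gh(3,4)])
  also have "\<dots> = (\<Sum>k. phi_coeff k * w ^ k) * (qpoch_inf (u * q) q / qpoch_inf v q)"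
    unfolding suminf_outer_inner_column by (rule suminf_mult2[OF summable_phi_term, symmetric])
  finally show ?thesis
    by (simp add: qphi_eq_suminf_phi_coeff mult.commute)
qed

lemma summand_eq:
  "qpoch u q n * qpoch (csqrt u * q) q n * qpoch (- csqrt u * q) q n * qpoch p q n
       * qpoch x q n * qpoch y q n
     / (qpoch q q n * qpoch (csqrt u) q n * qpoch (- csqrt u) q n * qpoch v q n
       * qpoch (u * q / x) q n * qpoch (u * q / y) q n)
     * (v / (x * y)) ^ n
     * qphi (u * q ^ n # u * q ^ (2 * n + 1) # As) (v * q ^ n # u * q ^ (2 * n) # Bs) q (w * q ^ n)
   = outer_coeff n * xfactor u q x n * xfactor u q y n * suminf (inner_term n)"
proof -
  have "qphi (u * q ^ n # u * q ^ (2 * n + 1) # As) (v * q ^ n # u * q ^ (2 * n) # Bs) q (w * q ^ n)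
      = suminf (inner_term n)"
    unfolding qphi_def by (rule arg_cong[where f = suminf]) (simp add: fun_eq_iff inner_term_def)
  then show ?thesis
    by (simp add: outer_coeff_def xfactor_def divide_inverse inverse_mult_distrib power_mult_distrib
        power_inverse mult_ac)
qed

lemma outer_summand_eventually_bounded:
  obtains M where "summable M" and
    "\<forall>\<^sub>F (n, xy) in sequentially \<times>\<^sub>F (at_infinity \<times>\<^sub>F at_infinity).
       norm (outer_coeff n * xfactor u q (fst xy) n * xfactor u q (snd xy) n * suminf (inner_term n)) \<le> M n"
proof -
  obtain e where e: "0 < e" "4 * norm v * e ^ 2 < 1"
    using ex_small_eps[of "norm v"] by auto
  define E where "E = exp (1 / (1 - norm q))"
  define P where "P n = (\<Prod>j<n. e + norm q ^ j)" for n
  obtain C where C: "0 < C" "\<And>n. norm (outer_coeff n) \<le> C * norm v ^ n"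
    using outer_coeff_bound by blast
  obtain D where D: "0 < D" "\<And>n. norm (suminf (inner_term n)) \<le> D"
    using inner_sum_bound by blast
  have P_nonneg: "0 \<le> P n" for n
    unfolding P_def using e by (intro prod_nonneg) auto
  have "\<forall>\<^sub>F x in at_infinity. \<forall>n. norm (xfactor u q x n) \<le> E * P n"
    using xfactor_eventually_bounded[OF q e(1)] unfolding E_def P_def .
  then have "\<forall>\<^sub>F (n, xy) in sequentially \<times>\<^sub>F (at_infinity \<times>\<^sub>F at_infinity).
      (\<forall>m. norm (xfactor u q (fst xy) m) \<le> E * P m) \<and> (\<forall>m. norm (xfactor u q (snd xy) m) \<le> E * P m)"
    using eventually_prodI[OF always_eventually[of "\<lambda>_::nat. True"] eventually_prodI]
    by (simp add: case_prod_unfold)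
  then have "\<forall>\<^sub>F (n, xy) in sequentially \<times>\<^sub>F (at_infinity \<times>\<^sub>F at_infinity).
      norm (outer_coeff n * xfactor u q (fst xy) n * xfactor u q (snd xy) n * suminf (inner_term n))
        \<le> C * norm v ^ n * (E * P n) * (E * P n) * D"
    by (rule eventually_mono) (use C D P_nonneg in \<open>auto simp: norm_mult E_def intro!: mult_mono\<close>)
  moreover have "summable (\<lambda>n. C * E * E * D * (norm v ^ n * P n ^ 2))"
    unfolding P_def by (intro summable_mult summable_power_mult_prod_sq[OF q e(1) _ e(2)]) simp
  then have "summable (\<lambda>n. C * norm v ^ n * (E * P n) * (E * P n) * D)"
    by (simp add: power2_eq_square mult_ac)
  ultimately show ?thesis
    using that by blast
qed

lemma tendsto_outer_sum:
  "((\<lambda>(x, y). \<Sum>n. outer_coeff n * xfactor u q x n * xfactor u q y n * suminf (inner_term n))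
     \<longlongrightarrow> (\<Sum>n. outer_coeff n * qpoch_lead_coeff q n ^ 2 * suminf (inner_term n)))
     (at_infinity \<times>\<^sub>F at_infinity)"
proof -
  obtain M where M: "summable M"
    "\<forall>\<^sub>F (n, xy) in sequentially \<times>\<^sub>F (at_infinity \<times>\<^sub>F at_infinity).
       norm (outer_coeff n * xfactor u q (fst xy) n * xfactor u q (snd xy) n * suminf (inner_term n)) \<le> M n"
    using outer_summand_eventually_bounded by blast
  have "((\<lambda>xy. \<Sum>n. outer_coeff n * xfactor u q (fst xy) n * xfactor u q (snd xy) n * suminf (inner_term n))
      \<longlongrightarrow> (\<Sum>n. outer_coeff n * qpoch_lead_coeff q n ^ 2 * suminf (inner_term n))) (at_infinity \<times>\<^sub>F at_infinity)"
  proof (rule tannerys_theorem[THEN conjunct2, THEN conjunct2, OF _ M(2) M(1)])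
    fix n
    have "((\<lambda>xy. outer_coeff n * xfactor u q (fst xy) n * xfactor u q (snd xy) n * suminf (inner_term n))
        \<longlongrightarrow> outer_coeff n * qpoch_lead_coeff q n * qpoch_lead_coeff q n * suminf (inner_term n))
        (at_infinity \<times>\<^sub>F at_infinity)"
      by (intro tendsto_intros filterlim_compose[OF xfactor_tendsto filterlim_fst]
          filterlim_compose[OF xfactor_tendsto filterlim_snd])
    then show "((\<lambda>xy. outer_coeff n * xfactor u q (fst xy) n * xfactor u q (snd xy) n * suminf (inner_term n))
        \<longlongrightarrow> outer_coeff n * qpoch_lead_coeff q n ^ 2 * suminf (inner_term n)) (at_infinity \<times>\<^sub>F at_infinity)"
      by (simp add: power2_eq_square mult.assoc)
  qed (simp add: prod_filter_eq_bot trivial_limit_at_infinity)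
  then show ?thesis
    by (simp add: case_prod_unfold)
qed

lemma wp_expansion_tendsto:
  "((\<lambda>(x, y). \<Sum>n.
       qpoch u q n * qpoch (csqrt u * q) q n * qpoch (- csqrt u * q) q n * qpoch p q n
         * qpoch x q n * qpoch y q n
       / (qpoch q q n * qpoch (csqrt u) q n * qpoch (- csqrt u) q n * qpoch v q n
         * qpoch (u * q / x) q n * qpoch (u * q / y) q n)
       * (v / (x * y)) ^ n
       * qphi (u * q ^ n # u * q ^ (2 * n + 1) # As) (v * q ^ n # u * q ^ (2 * n) # Bs) q (w * q ^ n))
     \<longlongrightarrow> qpoch_inf (u * q) q / qpoch_inf v q * qphi As Bs q w) (at_infinity \<times>\<^sub>F at_infinity)"
  using tendsto_outer_sum unfolding summand_eq suminf_outer_lead .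

end

theorem corollary3p1:
  fixes r :: nat and a b c z q :: complex and As Bs :: "complex list"
  assumes "length As = r + 1" and "length Bs = r"
    and "norm q < 1" and "q \<noteq> 0" and "norm (c * z) < 1"
    and "a * z \<noteq> 0" and "b \<noteq> 0"
    and "\<And>k. a * z * q ^ k \<noteq> 1"
    and "\<And>k. b * z * q ^ k \<noteq> 1"
    and "\<And>B k. B \<in> set Bs \<Longrightarrow> B * q ^ k \<noteq> 1"
  shows "((\<lambda>(x, y). \<Sum>n.
            qpoch (a*z) q n * qpoch (csqrt (a*z) * q) q n * qpoch (- csqrt (a*z) * q) q n
              * qpoch (a*q/b) q n * qpoch x q n * qpoch y q n
            / (qpoch q q n * qpoch (csqrt (a*z)) q n * qpoch (- csqrt (a*z)) q n
              * qpoch (b*z) q n * qpoch (a*z*q/x) q n * qpoch (a*z*q/y) q n)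
            * (b*z/(x*y)) ^ n
            * qphi (a*z*q^n # a*z*q^(2*n+1) # As) (b*z*q^n # a*z*q^(2*n) # Bs) q (c*z*q^n))
         \<longlongrightarrow> qpoch_inf (a*z*q) q / qpoch_inf (b*z) q * qphi As Bs q (c*z))
         (at_infinity \<times>\<^sub>F at_infinity)"
proof -
  interpret wp_expansion "a * z" "b * z" "a * q / b" q "c * z" As Bs
  proof
    show "a * q / b * (b * z) = a * z * q"
      using \<open>b \<noteq> 0\<close> by (simp add: field_simps)
  qed (use assms in auto)
  show ?thesis
    by (rule wp_expansion_tendsto)
qed

end
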